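(* Let $n\ge1$, $\preceq$ an admissible order on $L([0,1])$, $F\colon L([0,1])^2\to L([0,1])$, $G\colon L([0,1])^n\to L([0,1])$. The IV Sugeno-like $FG$-functional satisfies $\mathbf S_m^{F,G}(\mathbf1,\dots,\mathbf1)=\mathbf1$ for every IV fuzzy measure $m$ whenever: (i) $F(\mathbf1,\mathbf1)=\mathbf1$, $G=f\circ\mathrm{Proj}_1$ for some $f\colon L([0,1])\to L([0,1])$ with $f(\mathbf1)=\mathbf1$; or (ii) $F(\mathbf1,\mathbf1)=\mathbf1$, $F$ is non-decreasing in the second variable, $G=f\circ\vee$ for some $f$ with $f(\mathbf1)=\mathbf1$.
   Context: $N=\{1,\dots,n\}$. $L([0,1])=\{[a,b]:0\le a\le b\le1\}$, $\mathbf0=[0,0]$, $\mathbf1=[1,1]$. An admissible order $\preceq$ is a total order on $L([0,1])$ with $[a,b]\preceq[c,d]$ whenever $a\le c$, $b\le d$. $\vee$ denotes maximum w.r.t. $\preceq$; monotonicity is w.r.t. $\preceq$; $\mathrm{Proj}_1(X_1,\dots,X_n)=X_1$. An IV fuzzy measure w.r.t. $\preceq$ is $m\colon2^N\to L([0,1])$, $m(\emptyset)=\mathbf0$, $m(N)=\mathbf1$, $m(A)\preceq m(B)$ for $A\subseteq B$. For a permutation $\sigma$, $E_{\sigma(i)}=\{\sigma(i),\dots,\sigma(n)\}$. $\mathbf S_m^{F,G}(X_1,\dots,X_n)=G\big(F(X_{\sigma(1)},m(E_{\sigma(1)})),\dots,F(X_{\sigma(n)},m(E_{\sigma(n)}))\big)$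 with $\sigma$ any permutation such that $X_{\sigma(1)}\preceq\dots\preceq X_{\sigma(n)}$; it is defined when this value does not depend on the choice of $\sigma$ for all inputs. *)

theory Defs
  imports Complex_Main "HOL-Combinatorics.Permutations"
begin

type_synonym iv = "real \<times> real"

definition LI :: "iv set" where
  "LI = {(a,b). 0 \<le> a \<and> a \<le> b \<and> b \<le> 1}"

definition iv0 :: iv where "iv0 = (0,0)"
definition iv1 :: iv where "iv1 = (1,1)"

definition admissible_order :: "(iv \<Rightarrow> iv \<Rightarrow> bool) \<Rightarrow> bool" where
  "admissible_order le \<longleftrightarrow>
     (\<forall>x\<in>LI. le x x) \<and>
     (\<forall>x\<in>LI. \<forall>y\<in>LI. le x y \<and> le y x \<longrightarrow> x = y) \<and>
     (\<forall>x\<in>LI. \<forall>y\<in>LI. \<forall>z\<in>LI. le x y \<and> le y z \<longrightarrow> le x z) \<and>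
     (\<forall>x\<in>LI. \<forall>y\<in>LI. le x y \<or> le y x) \<and>
     (\<forall>a b c d. (a,b) \<in> LI \<longrightarrow> (c,d) \<in> LI \<longrightarrow> a \<le> c \<longrightarrow> b \<le> d \<longrightarrow> le (a,b) (c,d))"

definition iv_fuzzy_measure :: "(iv \<Rightarrow> iv \<Rightarrow> bool) \<Rightarrow> nat \<Rightarrow> (nat set \<Rightarrow> iv) \<Rightarrow> bool" where
  "iv_fuzzy_measure le n m \<longleftrightarrow>
     (\<forall>A. A \<subseteq> {1..n} \<longrightarrow> m A \<in> LI) \<and> m {} = iv0 \<and> m {1..n} = iv1 \<and>
     (\<forall>A B. A \<subseteq> B \<longrightarrow> B \<subseteq> {1..n} \<longrightarrow> le (m A) (m B))"

definition iv_max :: "(iv \<Rightarrow> iv \<Rightarrow> bool) \<Rightarrow> nat \<Rightarrow> (nat \<Rightarrow> iv) \<Rightarrow> iv" where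
  "iv_max le n Y = (THE y. y \<in> Y ` {1..n} \<and> (\<forall>i\<in>{1..n}. le (Y i) y))"

definition sorting_perm :: "(iv \<Rightarrow> iv \<Rightarrow> bool) \<Rightarrow> nat \<Rightarrow> (nat \<Rightarrow> iv) \<Rightarrow> (nat \<Rightarrow> nat) \<Rightarrow> bool" where
  "sorting_perm le n X \<sigma> \<longleftrightarrow> \<sigma> permutes {1..n} \<and>
     (\<forall>i j. 1 \<le> i \<longrightarrow> i \<le> j \<longrightarrow> j \<le> n \<longrightarrow> le (X (\<sigma> i)) (X (\<sigma> j)))"

text \<open>The IV Sugeno-like FG-functional, computed with an (arbitrarily chosen)
  sorting permutation; its value is meaningful when it does not depend on the choice.\<close>
definition sugeno_FG ::
  "(iv \<Rightarrow> iv \<Rightarrow> bool) \<Rightarrow> nat \<Rightarrow> (nat set \<Rightarrow> iv) \<Rightarrow> (iv \<Rightarrow> iv \<Rightarrow> iv) \<Rightarrow> ((nat \<Rightarrow> iv) \<Rightarrow> iv)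
    \<Rightarrow> (nat \<Rightarrow> iv) \<Rightarrow> iv" where
  "sugeno_FG le n m F G X =
     (let \<sigma> = (SOME \<sigma>. sorting_perm le n X \<sigma>)
      in G (\<lambda>i. F (X (\<sigma> i)) (m (\<sigma> ` {i..n}))))"

end

theory Submission
  imports Defs
begin

text \<open>The first argument of \<open>G\<close> is \<open>F(\<one>, m(E\<^bsub>\<sigma>(1)\<^esub>)) = F(\<one>, m(N)) = F(\<one>, \<one>) = \<one>\<close>
  for every sorting permutation \<open>\<sigma>\<close>. This settles (i) at once, and (ii) as well, because
  \<open>\<one>\<close> is the top element of every admissible order, so any family containing \<open>\<one>\<close> has
  maximum \<open>\<one>\<close>.\<close>

lemma iv1_in_LI [simp]: "iv1 \<in> LI"
  by (simp add: iv1_def LI_def)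

lemma admissible_order_le_iv1:
  assumes "admissible_order le" and "x \<in> LI"
  shows "le x iv1"
proof -
  obtain a b where "x = (a, b)" by force
  with assms show ?thesis
    unfolding admissible_order_def by (auto simp: iv1_def LI_def)
qed

lemma iv_max_eqI:
  assumes adm: "admissible_order le"
    and j: "j \<in> {1..n}"
    and in_LI: "\<forall>i\<in>{1..n}. Y i \<in> LI"
    and greatest: "\<forall>i\<in>{1..n}. le (Y i) (Y j)"
  shows "iv_max le n Y = Y j"
  unfolding iv_max_def
proof (rule the_equality)
  show "Y j \<in> Y ` {1..n} \<and> (\<forall>i\<in>{1..n}. le (Y i) (Y j))"
    using j greatest by blast
next
  fix y assume "y \<in> Y ` {1..n} \<and> (\<forall>i\<in>{1..n}. le (Y i) y)"
  then obtain k where k: "k \<in> {1..n}" "y = Y k" and "le (Y j) y"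
    using j by blast
  with greatest in_LI j adm show "y = Y j"
    unfolding admissible_order_def by metis
qed

lemma iv_max_eq_iv1:
  assumes "admissible_order le" and "j \<in> {1..n}" and "Y j = iv1"
    and "\<forall>i\<in>{1..n}. Y i \<in> LI"
  shows "iv_max le n Y = iv1"
proof -
  have "\<forall>i\<in>{1..n}. le (Y i) (Y j)"
    using assms by (auto intro: admissible_order_le_iv1)
  with iv_max_eqI[OF assms(1,2,4)] \<open>Y j = iv1\<close> show ?thesis
    by simp
qed

lemma sorting_perm_const:
  assumes "le c c"
  shows "sorting_perm le n (\<lambda>i. c) id"
  using assms by (simp add: sorting_perm_def)

lemma sugeno_FG_sorted:
  assumes "sorting_perm le n X \<tau>"
  obtains \<sigma> where "\<sigma> permutes {1..n}"
    and "sugeno_FG le n m F G X = G (\<lambda>i. F (X (\<sigma> i)) (m (\<sigma> ` {i..n})))"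
proof
  let ?\<sigma> = "SOME \<sigma>. sorting_perm le n X \<sigma>"
  have "sorting_perm le n X ?\<sigma>"
    using assms by (rule someI [where P = "sorting_perm le n X"])
  then show "?\<sigma> permutes {1..n}"
    unfolding sorting_perm_def by (elim conjE)
  show "sugeno_FG le n m F G X = G (\<lambda>i. F (X (?\<sigma> i)) (m (?\<sigma> ` {i..n})))"
    unfolding sugeno_FG_def Let_def by (rule refl)
qed

lemma iv_fuzzy_measure_permuted_tail_in_LI:
  assumes "iv_fuzzy_measure le n m" and "\<sigma> permutes {1..n}" and "1 \<le> i"
  shows "m (\<sigma> ` {i..n}) \<in> LI"
proof -
  have "\<sigma> ` {i..n} \<subseteq> \<sigma> ` {1..n}"
    using \<open>1 \<le> i\<close> by (intro image_mono) auto
  also have "\<dots> = {1..n}"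
    using \<open>\<sigma> permutes {1..n}\<close> by (rule permutes_image)
  finally show ?thesis
    using assms(1) unfolding iv_fuzzy_measure_def by blast
qed

lemma iv_fuzzy_measure_permuted_whole:
  assumes "iv_fuzzy_measure le n m" and "\<sigma> permutes {1..n}"
  shows "m (\<sigma> ` {1..n}) = iv1"
  using assms by (simp add: permutes_image iv_fuzzy_measure_def)

theorem proposition9:
  fixes n :: nat and le :: "iv \<Rightarrow> iv \<Rightarrow> bool"
    and F :: "iv \<Rightarrow> iv \<Rightarrow> iv" and G :: "(nat \<Rightarrow> iv) \<Rightarrow> iv"
  assumes "n \<ge> 1"
    and "admissible_order le"
    and F_maps: "\<forall>x\<in>LI. \<forall>y\<in>LI. F x y \<in> LI"
    and G_maps: "\<forall>Y. (\<forall>i\<in>{1..n}. Y i \<in> LI) \<longrightarrow> G Y \<in> LI"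
    and cases:
      "(F iv1 iv1 = iv1 \<and>
         (\<exists>f. (\<forall>x\<in>LI. f x \<in> LI) \<and> f iv1 = iv1 \<and>
              (\<forall>Y. (\<forall>i\<in>{1..n}. Y i \<in> LI) \<longrightarrow> G Y = f (Y 1))))
     \<or> (F iv1 iv1 = iv1 \<and>
         (\<forall>x\<in>LI. \<forall>y\<in>LI. \<forall>z\<in>LI. le y z \<longrightarrow> le (F x y) (F x z)) \<and>
         (\<exists>f. (\<forall>x\<in>LI. f x \<in> LI) \<and> f iv1 = iv1 \<and>
              (\<forall>Y. (\<forall>i\<in>{1..n}. Y i \<in> LI) \<longrightarrow> G Y = f (iv_max le n Y))))"
  shows "\<forall>m. iv_fuzzy_measure le n m \<longrightarrow> sugeno_FG le n m F G (\<lambda>i. iv1) = iv1"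
proof (intro allI impI)
  fix m assume m: "iv_fuzzy_measure le n m"
  have "le iv1 iv1"
    using \<open>admissible_order le\<close> by (simp add: admissible_order_le_iv1)
  then obtain \<sigma> where \<sigma>: "\<sigma> permutes {1..n}"
    and S: "sugeno_FG le n m F G (\<lambda>i. iv1) = G (\<lambda>i. F iv1 (m (\<sigma> ` {i..n})))"
    by (rule sugeno_FG_sorted[OF sorting_perm_const])
  define Y where "Y = (\<lambda>i. F iv1 (m (\<sigma> ` {i..n})))"
  have Y_in_LI: "\<forall>i\<in>{1..n}. Y i \<in> LI"
    using F_maps iv_fuzzy_measure_permuted_tail_in_LI[OF m \<sigma>] by (simp add: Y_def)
  have "F iv1 iv1 = iv1"
    using cases by blast
  then have Y1: "Y 1 = iv1"
    using iv_fuzzy_measure_permuted_whole[OF m \<sigma>] by (simp add: Y_def)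
  moreover have "1 \<in> {1..n}"
    using \<open>n \<ge> 1\<close> by simp
  ultimately have "iv_max le n Y = iv1"
    using iv_max_eq_iv1 \<open>admissible_order le\<close> Y_in_LI by blast
  with cases Y1 Y_in_LI show "sugeno_FG le n m F G (\<lambda>i. iv1) = iv1"
    unfolding S Y_def[symmetric] by auto
qed

end
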